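(* For all $m,n\ge 3$, the state complexities of the four languages $U_m(a,b,c)\cup (U_n(a,b,c))^R$, $U_m(a,b,c)\cap (U_n(a,b,c))^R$, $U_m(a,b,c)\setminus (U_n(a,b,c))^R$ and $(U_n(a,b,c))^R\setminus U_m(a,b,c)$ are all equal to $m2^n-(m-1)$, and the state complexity of $U_m(a,b,c)\oplus (U_n(a,b,c))^R$ is $m2^n$.
   Context: The state complexity of a regular language is the number of states of its minimal complete DFA. For $n\ge 3$, $\mathcal{U}_n(a,b,c)$ is the DFA over alphabet $\{a,b,c\}$ with state set $\{0,\dots,n-1\}$, initial state $0$, final state set $\{n-1\}$, where $a$ maps $i\mapsto i+1\pmod n$; $b$ swaps states $0$ and $1$ and fixes all others; $c$ maps state $n-1$ to state $0$ and fixes all other states. $U_n(a,b,c)$ is its language. $L^R$ denotes the reversal of $L$; $\setminus$ is set difference and $\oplus$ is symmetric difference. *)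

theory Defs
  imports Main
begin

datatype sym = a | b | c

text \<open>Without loss of generality the states are
  0,...,k-1 (any finite DFA is isomorphic to one of this form).\<close>
definition is_cdfa :: "nat \<Rightarrow> (nat \<Rightarrow> sym \<Rightarrow> nat) \<Rightarrow> nat \<Rightarrow> nat set \<Rightarrow> bool" where
  "is_cdfa k \<delta> q0 F \<longleftrightarrow> q0 < k \<and> (\<forall>q<k. \<forall>s. \<delta> q s < k) \<and> F \<subseteq> {..<k}"

definition dfa_lang :: "(nat \<Rightarrow> sym \<Rightarrow> nat) \<Rightarrow> nat \<Rightarrow> nat set \<Rightarrow> sym list set" where
  "dfa_lang \<delta> q0 F = {w. foldl \<delta> q0 w \<in> F}"

definition state_complexity :: "sym list set \<Rightarrow> nat" where
  "state_complexity L = (LEAST k. \<exists>\<delta> q0 F. is_cdfa k \<delta> q0 F \<and> dfa_lang \<delta> q0 F = L)"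

definition U_delta :: "nat \<Rightarrow> nat \<Rightarrow> sym \<Rightarrow> nat" where
  "U_delta n q s = (case s of
      a \<Rightarrow> (q + 1) mod n
    | b \<Rightarrow> (if q = 0 then 1 else if q = 1 then 0 else q)
    | c \<Rightarrow> (if q = n - 1 then 0 else q))"

definition U_lang :: "nat \<Rightarrow> sym list set" where
  "U_lang n = dfa_lang (U_delta n) 0 {n - 1}"

definition lang_rev :: "sym list set \<Rightarrow> sym list set" where
  "lang_rev L = rev ` L"

end

theory Submission
  imports Defs
begin

text \<open>
  By the Myhill--Nerode theorem, the state complexity of a language equals the
  number of its distinct left quotients.  For a Boolean operation \<open>op\<close>, the language
  \<open>{w. op (w \<in> U\<^sub>m) (w \<in> U\<^sub>n\<^sup>R)}\<close> is recognised by the product of \<open>U\<^sub>m\<close> with the subset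
  automaton of \<open>U\<^sub>n\<^sup>R\<close>, whose states are the \<open>m 2\<^sup>n\<close> pairs \<open>(i, S)\<close> with \<open>i < m\<close> and
  \<open>S \<subseteq> {..<n}\<close>.  Hence it suffices to show
  (1) every state \<open>(i, S)\<close> is reachable, and
  (2) two states accept the same language only if they have the same set component \<open>S\<close>
      and, unless \<open>op\<close> ignores \<open>U\<^sub>m\<close> on \<open>S\<close>, the same \<open>U\<^sub>m\<close> component.
  Since \<open>a\<close> and \<open>b\<close> act as permutations, both steps rest on connectivity arguments: a set
  closed under permutations of finite order is also closed under their inverses.  Step (1)
  first connects all pairs \<open>(i, q)\<close> of single states (the "pair graph"), then reaches sets of growing size using \<open>c\<close> and
  transpositions of adjacent states; step (2) uses synchronising words of \<open>U\<^sub>n\<close> and words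
  over \<open>{a, b}\<close> separating states of \<open>U\<^sub>m\<close>.  For union, intersection and the two differences
  exactly the \<open>m - 1\<close> nonzero states with \<open>S = {..<n}\<close> or \<open>S = {}\<close> collapse; for the
  symmetric difference no states collapse.
\<close>

section \<open>Myhill--Nerode: state complexity counts left quotients\<close>

definition left_quot :: "sym list set \<Rightarrow> sym list \<Rightarrow> sym list set" where
  "left_quot L u = {w. u @ w \<in> L}"

lemma foldl_closed:
  assumes "\<forall>q<k. \<forall>s. \<delta> q s < k" and "q < k"
  shows "foldl \<delta> q w < k"
  using assms by (induction w arbitrary: q) auto

text \<open>Every complete DFA for \<open>L\<close> has at least as many states as \<open>L\<close> has left quotients:
  the quotient by \<open>u\<close> only depends on the state reached by \<open>u\<close>.\<close>
lemma card_left_quots_le: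
  assumes "is_cdfa k \<delta> q0 F" and "dfa_lang \<delta> q0 F = L"
  shows "finite (range (left_quot L)) \<and> card (range (left_quot L)) \<le> k"
proof -
  define lang_of where "lang_of = (\<lambda>q. {w. foldl \<delta> q w \<in> F})"
  have "left_quot L u = lang_of (foldl \<delta> q0 u)" for u
    using assms(2) unfolding left_quot_def lang_of_def dfa_lang_def by auto
  moreover have "foldl \<delta> q0 u < k" for u
    using assms(1) foldl_closed unfolding is_cdfa_def by blast
  ultimately have "range (left_quot L) \<subseteq> lang_of ` {..<k}" by auto
  moreover have "card (lang_of ` {..<k}) \<le> k"
    using card_image_le[of "{..<k}" lang_of] by simp
  ultimately show ?thesis by (meson card_mono finite_imageI finite_lessThan finite_subset le_trans)
qed

text \<open>Conversely, the left quotients themselves form a complete DFA for \<open>L\<close>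
  (transported to the state set \<open>{0..<card Q}\<close> along a bijection).\<close>
lemma quotient_dfa:
  assumes fin: "finite (range (left_quot L))"
  shows "\<exists>\<delta> q0 F. is_cdfa (card (range (left_quot L))) \<delta> q0 F \<and> dfa_lang \<delta> q0 F = L"
proof -
  define Q where "Q = range (left_quot L)"
  define K where "K = card Q"
  obtain h where h: "bij_betw h {0..<K} Q"
    using ex_bij_betw_nat_finite[of Q] fin unfolding Q_def K_def by blast
  define idx where "idx = the_inv_into {0..<K} h"
  have idx_lt: "idx X < K" if "X \<in> Q" for X
    using h that unfolding idx_def
    by (metis atLeastLessThan_iff bij_betw_def the_inv_into_into order_refl)
  have h_idx: "h (idx X) = X" if "X \<in> Q" for X
    using h that unfolding idx_def by (meson bij_betw_def f_the_inv_into_f_bij_betw)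
  have in_Q: "left_quot L u \<in> Q" for u
    unfolding Q_def by simp
  define \<delta> where "\<delta> = (\<lambda>i s. idx {w. s # w \<in> h i})"
  define F where "F = {i. i < K \<and> [] \<in> h i}"
  have step: "{w. s # w \<in> left_quot L u} = left_quot L (u @ [s])" for s u
    unfolding left_quot_def by auto
  have run: "foldl \<delta> (idx (left_quot L [])) u = idx (left_quot L u)" for u
  proof (induction u rule: rev_induct)
    case (snoc s u)
    then show ?case unfolding \<delta>_def by (simp add: h_idx in_Q step)
  qed simp
  have "is_cdfa K \<delta> (idx (left_quot L [])) F"
    unfolding is_cdfa_def
  proof (intro conjI allI impI)
    show "idx (left_quot L []) < K" using idx_lt in_Q by blast
    fix q s assume "q < K"
    then have "h q \<in> Q" using h by (auto simp: bij_betw_def)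
    then obtain u where "h q = left_quot L u" unfolding Q_def by auto
    then show "\<delta> q s < K" unfolding \<delta>_def using idx_lt in_Q step by simp
  qed (auto simp: F_def)
  moreover have "w \<in> dfa_lang \<delta> (idx (left_quot L [])) F \<longleftrightarrow> w \<in> L" for w
    unfolding dfa_lang_def F_def using run idx_lt h_idx in_Q by (simp add: left_quot_def)
  ultimately show ?thesis unfolding K_def Q_def by blast
qed

theorem state_complexity_eq_card_left_quots:
  assumes "finite (range (left_quot L))"
  shows "state_complexity L = card (range (left_quot L))"
  unfolding state_complexity_def
proof (rule Least_equality)
  show "\<exists>\<delta> q0 F. is_cdfa (card (range (left_quot L))) \<delta> q0 F \<and> dfa_lang \<delta> q0 F = L"
    using quotient_dfa[OF assms] .
qed (use card_left_quots_le in blast)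

section \<open>Connectivity under maps of finite order\<close>

text \<open>When the maps are permutations of finite order, this is
  the equivalence relation "same connected component of the Schreier graph".\<close>
definition closed_under :: "'a set \<Rightarrow> ('a \<Rightarrow> 'a) set \<Rightarrow> 'a set \<Rightarrow> bool" where
  "closed_under V G X \<longleftrightarrow> (\<forall>g\<in>G. \<forall>x\<in>V. x \<in> X \<longrightarrow> g x \<in> X)"

definition linked :: "'a set \<Rightarrow> ('a \<Rightarrow> 'a) set \<Rightarrow> 'a \<Rightarrow> 'a \<Rightarrow> bool" where
  "linked V G x y \<longleftrightarrow> (\<forall>X. closed_under V G X \<longrightarrow> (x \<in> X \<longleftrightarrow> y \<in> X))"

lemma linked_refl: "linked V G x x"
  by (simp add: linked_def)

lemma linked_sym: "linked V G x y \<Longrightarrow> linked V G y x"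
  by (simp add: linked_def)

lemma linked_trans: "linked V G x y \<Longrightarrow> linked V G y z \<Longrightarrow> linked V G x z"
  by (simp add: linked_def)

lemma funpow_closed: "g ` V \<subseteq> V \<Longrightarrow> x \<in> V \<Longrightarrow> (g ^^ k) x \<in> V"
  by (induction k) auto

lemma closed_under_funpow:
  assumes "closed_under V G X" "g \<in> G" "g ` V \<subseteq> V" "x \<in> V" "x \<in> X"
  shows "(g ^^ k) x \<in> X"
  using assms funpow_closed[OF assms(3,4)] by (induction k) (auto simp: closed_under_def)

text \<open>A point is linked to its images under a map that has finite order at that point:
  the inverse of \<open>g\<^sup>k\<close> is again a power of \<open>g\<close>.\<close>
lemma linked_funpow:
  assumes g: "g \<in> G" "g ` V \<subseteq> V" and x: "x \<in> V"
    and order: "(g ^^ N) x = x" "0 < N"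
  shows "linked V G x ((g ^^ k) x)"
  unfolding linked_def
proof (intro allI impI iffI)
  fix X assume cl: "closed_under V G X"
  show "x \<in> X \<Longrightarrow> (g ^^ k) x \<in> X" using closed_under_funpow[OF cl g x] .
  assume gx: "(g ^^ k) x \<in> X"
  have period: "(g ^^ (N * j)) x = x" for j
    by (induction j) (simp_all add: funpow_add order(1))
  have "N * k - k + k = N * k" using order(2) by (cases N) auto
  then have "(g ^^ (N * k - k)) ((g ^^ k) x) = (g ^^ (N * k)) x"
    by (metis comp_apply funpow_add)
  then show "x \<in> X"
    using closed_under_funpow[OF cl g funpow_closed[OF g(2) x] gx, of "N * k - k"] period by simp
qed

text \<open>Linked points cannot be separated by a set that is closed under taking preimages
  either, since its complement in \<open>V\<close> is closed under \<open>G\<close>.\<close>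
lemma linked_preimage_closed:
  assumes "linked V G x y" "x \<in> V" "y \<in> V" "\<forall>g\<in>G. g ` V \<subseteq> V"
    and pre: "\<forall>g\<in>G. \<forall>z\<in>V. g z \<in> X \<longrightarrow> z \<in> X"
  shows "x \<in> X \<longleftrightarrow> y \<in> X"
proof -
  have "closed_under V G (V - X)"
    using assms(4) pre unfolding closed_under_def by blast
  then show ?thesis using assms(1-3) unfolding linked_def by blast
qed

section \<open>The automata \<open>U\<^sub>k(a,b,c)\<close>\<close>

definition swap01 :: "nat \<Rightarrow> nat" where
  "swap01 x = (if x = 0 then 1 else if x = 1 then 0 else x)"

lemma swap01_swap01 [simp]: "swap01 (swap01 x) = x"
  by (simp add: swap01_def)

lemma swap01_lt: "x < k \<Longrightarrow> 2 \<le> k \<Longrightarrow> swap01 x < k"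
  by (auto simp: swap01_def)

lemma U_delta_a: "U_delta k q a = (q + 1) mod k"
  and U_delta_b: "U_delta k q b = swap01 q"
  and U_delta_c: "U_delta k q c = (if q = k - 1 then 0 else q)"
  by (simp_all add: U_delta_def swap01_def)

lemma U_delta_lt: "2 \<le> k \<Longrightarrow> q < k \<Longrightarrow> U_delta k q s < k"
  by (cases s) (auto simp: U_delta_def)

lemma U_run_lt: "2 \<le> k \<Longrightarrow> q < k \<Longrightarrow> foldl (U_delta k) q w < k"
  by (induction w arbitrary: q) (auto simp: U_delta_lt)

lemma U_run_a: "q < k \<Longrightarrow> foldl (U_delta k) q (replicate j a) = (q + j) mod k"
proof (induction j arbitrary: q)
  case (Suc j)
  have "(q + 1) mod k < k" using Suc.prems by simp
  then show ?case using Suc.IH by (simp add: U_delta_a mod_simps)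
qed simp

lemma mod_cancel_nat: "(x + z) mod k = (y + z) mod k \<Longrightarrow> x mod k = y mod (k::nat)"
  by (simp add: nat_mod_eq_iff)

text \<open>The letters \<open>a\<close> and \<open>b\<close> act as permutations, so words over \<open>{a,b}\<close> act injectively.\<close>
lemma U_run_ab_inj:
  assumes "set w \<subseteq> {a, b}" "x < k" "y < k" "foldl (U_delta k) x w = foldl (U_delta k) y w"
    and "2 \<le> k"
  shows "x = y"
  using assms
proof (induction w arbitrary: x y)
  case (Cons s w)
  then have "U_delta k x s = U_delta k y s"
    by (simp add: U_delta_lt)
  moreover have "s = a \<or> s = b" using Cons.prems(1) by simp
  ultimately show "x = y"
    using Cons.prems(2,3) mod_cancel_nat[of x 1 k y] by (auto simp: U_delta_a U_delta_b) (metis swap01_swap01)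
qed simp

section \<open>The product with the reversed subset automaton\<close>

locale two_U =
  fixes m n :: nat
  assumes m3: "3 \<le> m" and n3: "3 \<le> n"
begin

abbreviation dm where "dm \<equiv> U_delta m"
abbreviation dn where "dn \<equiv> U_delta n"

lemma dm_run_lt: "q < m \<Longrightarrow> foldl dm q w < m"
  using m3 by (simp add: U_run_lt)

lemma dn_run_lt: "q < n \<Longrightarrow> foldl dn q w < n"
  using n3 by (simp add: U_run_lt)

text \<open>A state \<open>(i, S)\<close> records the state \<open>i\<close> of \<open>U\<^sub>m\<close> and the set \<open>S\<close> of states of \<open>U\<^sub>n\<close>
  from which the reversal of the word read so far leads to the final state:
  the subset automaton of \<open>U\<^sub>n\<^sup>R\<close> is read with \<open>a\<close> and \<open>b\<close> acting by preimage.\<close>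
definition states :: "(nat \<times> nat set) set" where
  "states = {..<m} \<times> Pow {..<n}"

lemma in_states [simp]: "(i, S) \<in> states \<longleftrightarrow> i < m \<and> S \<subseteq> {..<n}"
  by (auto simp: states_def)

definition pstep :: "nat \<times> nat set \<Rightarrow> sym \<Rightarrow> nat \<times> nat set" where
  "pstep y s = (dm (fst y) s, {q. q < n \<and> dn q s \<in> snd y})"

lemma pstep_run:
  "S \<subseteq> {..<n} \<Longrightarrow>
     foldl pstep (i, S) w = (foldl dm i w, {q. q < n \<and> foldl dn q (rev w) \<in> S})"
proof (induction w arbitrary: i S)
  case (Cons s w)
  have "foldl pstep (i, S) (s # w) = foldl pstep (dm i s, {q. q < n \<and> dn q s \<in> S}) w"
    by (simp add: pstep_def)
  also have "\<dots> = (foldl dm (dm i s) w,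
      {q. q < n \<and> foldl dn q (rev w) \<in> {q. q < n \<and> dn q s \<in> S}})"
    using Cons.IH[of "{q. q < n \<and> dn q s \<in> S}"] by auto
  also have "{q. q < n \<and> foldl dn q (rev w) \<in> {q. q < n \<and> dn q s \<in> S}}
      = {q. q < n \<and> foldl dn q (rev (s # w)) \<in> S}"
    using dn_run_lt by auto
  finally show ?case by simp
qed auto

lemma pstep_in_states: "y \<in> states \<Longrightarrow> pstep y s \<in> states"
  using m3 by (cases y) (auto simp: pstep_def U_delta_lt)

definition reached :: "sym list \<Rightarrow> nat \<times> nat set" where
  "reached u = foldl pstep (0, {n - 1}) u"

lemma reached_in_states: "reached u \<in> states"
proof -
  have "foldl pstep y u \<in> states" if "y \<in> states" for y
    using that by (induction u arbitrary: y) (auto simp: pstep_in_states)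
  then show ?thesis using m3 n3 unfolding reached_def by simp
qed

lemma reached_snoc: "reached (u @ [s]) = pstep (reached u) s"
  by (simp add: reached_def)

definition combined :: "(bool \<Rightarrow> bool \<Rightarrow> bool) \<Rightarrow> sym list set" where
  "combined op = {w. op (w \<in> U_lang m) (w \<in> lang_rev (U_lang n))}"

definition lang_at :: "(bool \<Rightarrow> bool \<Rightarrow> bool) \<Rightarrow> nat \<times> nat set \<Rightarrow> sym list set" where
  "lang_at op y = {w. op (fst (foldl pstep y w) = m - 1) (0 \<in> snd (foldl pstep y w))}"

lemma lang_at_run:
  "S \<subseteq> {..<n} \<Longrightarrow>
     lang_at op (i, S) = {w. op (foldl dm i w = m - 1) (foldl dn 0 (rev w) \<in> S)}"
  using n3 by (simp add: lang_at_def pstep_run)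

lemma in_lang_rev_U: "w \<in> lang_rev (U_lang n) \<longleftrightarrow> foldl dn 0 (rev w) = n - 1"
proof -
  have "w \<in> rev ` X \<longleftrightarrow> rev w \<in> X" for X :: "sym list set"
    by (metis image_iff rev_rev_ident)
  then show ?thesis unfolding lang_rev_def U_lang_def dfa_lang_def by simp
qed

lemma left_quot_combined: "left_quot (combined op) u = lang_at op (reached u)"
proof -
  define S where "S = {q. q < n \<and> foldl dn q (rev u) = n - 1}"
  have S: "S \<subseteq> {..<n}" unfolding S_def by auto
  have "reached u = (foldl dm 0 u, S)"
    unfolding reached_def S_def using pstep_run[of "{n - 1}"] n3 by simp
  moreover have "w \<in> left_quot (combined op) u \<longleftrightarrow>
      op (foldl dm (foldl dm 0 u) w = m - 1) (foldl dn (foldl dn 0 (rev w)) (rev u) = n - 1)" for w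
    unfolding left_quot_def combined_def in_lang_rev_U by (simp add: U_lang_def dfa_lang_def)
  moreover have "foldl dn 0 (rev w) \<in> S \<longleftrightarrow> foldl dn (foldl dn 0 (rev w)) (rev u) = n - 1" for w
    using dn_run_lt[of 0] n3 by (simp add: S_def)
  ultimately show ?thesis by (auto simp: lang_at_run[OF S])
qed

end

section \<open>Connectivity of the pair graph\<close>

context two_U
begin

text \<open>On single states the product acts by the two permutations below: \<open>a\<close> advances the
  \<open>U\<^sub>m\<close> component and moves the \<open>U\<^sub>n\<close> component backwards; \<open>b\<close> swaps 0 and 1 in both.\<close>
definition pairs :: "(nat \<times> nat) set" where
  "pairs = {..<m} \<times> {..<n}"

lemma in_pairs [simp]: "(i, q) \<in> pairs \<longleftrightarrow> i < m \<and> q < n"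
  by (simp add: pairs_def)

definition pair_a :: "nat \<times> nat \<Rightarrow> nat \<times> nat" where
  "pair_a s = ((fst s + 1) mod m, (snd s + (n - 1)) mod n)"

definition pair_b :: "nat \<times> nat \<Rightarrow> nat \<times> nat" where
  "pair_b s = (swap01 (fst s), swap01 (snd s))"

abbreviation pconn :: "nat \<times> nat \<Rightarrow> nat \<times> nat \<Rightarrow> bool" where
  "pconn \<equiv> linked pairs {pair_a, pair_b}"

lemmas pconn_refl = linked_refl[of pairs "{pair_a, pair_b}"]
  and pconn_sym = linked_sym[of pairs "{pair_a, pair_b}"]
  and pconn_trans = linked_trans[of pairs "{pair_a, pair_b}"]

lemma pair_a_maps: "pair_a ` pairs \<subseteq> pairs"
  using m3 n3 by (auto simp: pairs_def pair_a_def)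

lemma pair_b_maps: "pair_b ` pairs \<subseteq> pairs"
  using m3 n3 by (auto simp: pairs_def pair_b_def swap01_lt)

lemma pair_a_funpow:
  "(i, q) \<in> pairs \<Longrightarrow> (pair_a ^^ k) (i, q) = ((i + k) mod m, (q + k * (n - 1)) mod n)"
proof (induction k)
  case (Suc k)
  have e: "q + k * (n - 1) + (n - 1) = q + Suc k * (n - 1)" by simp
  have "(pair_a ^^ Suc k) (i, q) = pair_a ((i + k) mod m, (q + k * (n - 1)) mod n)"
    using Suc by simp
  also have "\<dots> = ((i + Suc k) mod m, ((q + k * (n - 1)) mod n + (n - 1)) mod n)"
    unfolding pair_a_def by (simp add: mod_simps)
  also have "((q + k * (n - 1)) mod n + (n - 1)) mod n = (q + Suc k * (n - 1)) mod n"
    by (metis e mod_add_left_eq)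
  finally show ?case .
qed simp

text \<open>\<open>pair_a\<close> has order dividing \<open>m n\<close> and \<open>pair_b\<close> is an involution, so each pair is linked
  to its images under them.\<close>
lemma pconn_a:
  assumes "s \<in> pairs" shows "pconn s ((pair_a ^^ k) s)"
proof (rule linked_funpow[where N = "m * n"])
  obtain i q where s: "s = (i, q)" by (cases s)
  have e: "m * n * (n - 1) = n * (m * (n - 1))" by simp
  have "(q + n * (m * (n - 1))) mod n = q" using assms s by simp
  then have "(q + m * n * (n - 1)) mod n = q" by (simp only: e)
  moreover have "(i + m * n) mod m = i" using assms s by simp
  ultimately show "(pair_a ^^ (m * n)) s = s" using pair_a_funpow assms s by simp
qed (use assms m3 n3 pair_a_maps in auto)

lemma pconn_b:
  assumes "s \<in> pairs" shows "pconn s (pair_b s)"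
  using linked_funpow[of pair_b _ pairs s 2 1] assms pair_b_maps
  by (simp add: numeral_2_eq_2 pair_b_def)

end

lemma avoid_0_1:
  fixes m r x :: nat
  assumes "m \<ge> 3" "r < m" "r \<noteq> 0" "x < m"
  shows "\<exists>j \<in> {0, 1, 2::nat}. (x + j * r) mod m \<notin> {0, 1}"
proof (cases "x \<in> {0, 1}")
  case False
  then show ?thesis using assms by (intro bexI[of _ 0]) auto
next
  case True
  then consider "x = 0" | "x = 1" by blast
  then show ?thesis
  proof cases
    case 1
    show ?thesis
    proof (cases "r = 1")
      case True then show ?thesis using assms 1 by (intro bexI[of _ 2]) auto
    next
      case False then show ?thesis using assms 1 by (intro bexI[of _ 1]) auto
    qed
  next
    case 2
    show ?thesis
    proof (cases "r = m - 1")
      case True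
      have e: "1 + 2 * (m - 1) = (m - 1) + m" using assms by simp
      have "((m - 1) + m) mod m = m - 1" using assms by (simp only: mod_add_self2) simp
      then have "(1 + 2 * (m - 1)) mod m = m - 1" unfolding e .
      then show ?thesis using assms 2 True by (intro bexI[of _ 2]) auto
    next
      case False
      then have "(1 + r) mod m = 1 + r" using assms by simp
      then show ?thesis using assms 2 by (intro bexI[of _ 1]) auto
    qed
  qed
qed

lemma mod_mul_in: "(x + j * y) mod m = (x + j * (y mod m)) mod (m::nat)"
  by (metis mod_add_right_eq mod_mult_right_eq)

context two_U
begin

text \<open>If some \<open>a\<^sup>k\<close> sends \<open>i\<close> to 0 while sending \<open>q\<close> outside \<open>{0, 1}\<close>, then it sends \<open>(i, q)\<close>
  and \<open>(i + 1, q)\<close> to \<open>(0, q')\<close> and \<open>(1, q')\<close>, which \<open>b\<close> swaps; so these pairs are linked.\<close>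
lemma pconn_next_i:
  assumes iq: "(i, q) \<in> pairs" and to0: "(i + k) mod m = 0"
    and avoid: "(q + k * (n - 1)) mod n \<notin> {0, 1}"
  shows "pconn (i, q) ((i + 1) mod m, q)"
proof -
  define q' where "q' = (q + k * (n - 1)) mod n"
  have iq': "((i + 1) mod m, q) \<in> pairs" using iq m3 by simp
  have "((i + 1) mod m + k) mod m = ((i + k) mod m + 1) mod m"
    by (simp add: mod_simps add.commute add.left_commute)
  then have "(pair_a ^^ k) ((i + 1) mod m, q) = (1, q')"
    using to0 m3 pair_a_funpow[OF iq'] unfolding q'_def by simp
  then have "pconn ((i + 1) mod m, q) (1, q')" using pconn_a[OF iq', of k] by simp
  moreover have "pconn (i, q) (0, q')" using pconn_a[OF iq, of k] pair_a_funpow[OF iq] to0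
    unfolding q'_def by simp
  moreover have "pconn (0, q') (1, q')"
    using pconn_b[of "(0, q')"] avoid m3 n3 unfolding q'_def by (simp add: pair_b_def swap01_def)
  ultimately show ?thesis using pconn_trans pconn_sym by blast
qed

lemma pconn_next_q:
  assumes iq: "(i, q) \<in> pairs" and to0: "(q + k * (n - 1)) mod n = 0"
    and avoid: "(i + k) mod m \<notin> {0, 1}"
  shows "pconn (i, q) (i, (q + 1) mod n)"
proof -
  define i' where "i' = (i + k) mod m"
  have iq': "(i, (q + 1) mod n) \<in> pairs" using iq n3 by simp
  have "((q + 1) mod n + k * (n - 1)) mod n = ((q + k * (n - 1)) mod n + 1) mod n"
    by (simp add: mod_simps add.commute add.left_commute)
  then have "(pair_a ^^ k) (i, (q + 1) mod n) = (i', 1)"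
    using to0 n3 pair_a_funpow[OF iq'] unfolding i'_def by simp
  then have "pconn (i, (q + 1) mod n) (i', 1)" using pconn_a[OF iq', of k] by simp
  moreover have "pconn (i, q) (i', 0)" using pconn_a[OF iq, of k] pair_a_funpow[OF iq] to0
    unfolding i'_def by simp
  moreover have "pconn (i', 0) (i', 1)"
    using pconn_b[of "(i', 0)"] avoid m3 n3 unfolding i'_def by (simp add: pair_b_def swap01_def)
  ultimately show ?thesis using pconn_trans pconn_sym by blast
qed

text \<open>When \<open>m \<nmid> n\<close>, a suitable \<open>k\<close> for moving the second component is found among
  \<open>q, q + n, q + 2n\<close>; when \<open>n \<nmid> m\<close>, one for the first component among \<open>m - i + jm\<close>.\<close>
lemma exists_shift_q:
  assumes "\<not> m dvd n" "(i, q) \<in> pairs"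
  shows "\<exists>k. (q + k * (n - 1)) mod n = 0 \<and> (i + k) mod m \<notin> {0, 1}"
proof -
  have r: "n mod m < m" "n mod m \<noteq> 0" using assms m3 by (auto simp: dvd_eq_mod_eq_0)
  have "\<exists>j\<in>{0, 1, 2::nat}. ((i + q) mod m + j * (n mod m)) mod m \<notin> {0, 1}"
    using avoid_0_1[OF m3 r, of "(i + q) mod m"] m3 by simp
  then obtain j where j: "((i + q) mod m + j * (n mod m)) mod m \<notin> {0, 1}" by blast
  define k where "k = q + j * n"
  have "q + k * (n - 1) = n * (q + j * (n - 1))" unfolding k_def using n3
    by (cases n) (simp_all add: algebra_simps)
  then have "(q + k * (n - 1)) mod n = 0" by simp
  moreover have "(i + k) mod m = ((i + q) mod m + j * (n mod m)) mod m"
    unfolding k_def by (metis add.assoc mod_add_left_eq mod_mul_in)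
  ultimately show ?thesis using j by (intro exI[of _ k]) simp
qed

lemma exists_shift_i:
  assumes "\<not> n dvd m" "(i, q) \<in> pairs"
  shows "\<exists>k. (i + k) mod m = 0 \<and> (q + k * (n - 1)) mod n \<notin> {0, 1}"
proof -
  have r: "(m * (n - 1)) mod n \<noteq> 0"
  proof
    assume h: "(m * (n - 1)) mod n = 0"
    have "m * (n - 1) + m = m * n" using n3 by (cases n) (simp_all add: algebra_simps)
    then have "((m * (n - 1)) mod n + m) mod n = 0" by (simp add: mod_add_left_eq)
    then have "m mod n = 0" using h by simp
    then show False using assms(1) by (simp add: dvd_eq_mod_eq_0)
  qed
  have "\<exists>j\<in>{0, 1, 2::nat}.
      ((q + (m - i) * (n - 1)) mod n + j * ((m * (n - 1)) mod n)) mod n \<notin> {0, 1}"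
    using avoid_0_1[OF n3 _ r, of "(q + (m - i) * (n - 1)) mod n"] n3 by simp
  then obtain j
    where j: "((q + (m - i) * (n - 1)) mod n + j * ((m * (n - 1)) mod n)) mod n \<notin> {0, 1}"
    by blast
  define k where "k = (m - i) + j * m"
  have "(i + k) mod m = 0" unfolding k_def using assms(2) by simp
  moreover have "k * (n - 1) = (m - i) * (n - 1) + j * (m * (n - 1))"
    unfolding k_def by (simp add: algebra_simps)
  then have "(q + k * (n - 1)) mod n
      = ((q + (m - i) * (n - 1)) mod n + j * ((m * (n - 1)) mod n)) mod n"
    by (metis add.assoc mod_add_left_eq mod_mul_in)
  ultimately show ?thesis using j by (intro exI[of _ k]) simp
qed

lemma pconn_q_chain:
  assumes "\<forall>q<n. pconn (i, q) (i, (q + 1) mod n)"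
  shows "q < n \<Longrightarrow> pconn (i, 0) (i, q)"
proof (induction q)
  case (Suc q)
  have "pconn (i, q) (i, (q + 1) mod n)" using assms[rule_format, of q] Suc.prems by simp
  then have "pconn (i, q) (i, Suc q)" using Suc.prems by simp
  then show ?case using Suc pconn_trans by simp
qed (simp add: pconn_refl)

lemma pconn_i_chain:
  assumes "\<forall>i<m. pconn (i, q) ((i + 1) mod m, q)"
  shows "i < m \<Longrightarrow> pconn (0, q) (i, q)"
proof (induction i)
  case (Suc i)
  have "pconn (i, q) ((i + 1) mod m, q)" using assms[rule_format, of i] Suc.prems by simp
  then have "pconn (i, q) (Suc i, q)" using Suc.prems by simp
  then show ?case using Suc pconn_trans by simp
qed (simp add: pconn_refl)

lemma k_plus_k_times_pred_mod: "(k + k * (n - 1)) mod n = 0"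
proof -
  have "k + k * (n - 1) = k * n" using n3 by (cases n) (simp_all add: algebra_simps)
  then show ?thesis by simp
qed

text \<open>The target \<open>(m - 1, 0)\<close> is reached by \<open>a\<^sup>q\<close> from any pair on the diagonal \<open>i + q \<equiv> m - 1\<close>.\<close>
lemma pconn_top_diag:
  assumes iq: "(i, q) \<in> pairs" and diag: "(i + q) mod m = m - 1"
  shows "pconn (i, q) (m - 1, 0)"
proof -
  have "(pair_a ^^ q) (i, q) = (m - 1, 0)"
    using pair_a_funpow[OF iq] diag k_plus_k_times_pred_mod[of q] by simp
  then show ?thesis using pconn_a[OF iq, of q] by simp
qed

text \<open>If \<open>m \<nmid> n\<close>, all pairs with the same first component are linked, so \<open>(i, q)\<close> is linked
  to the pair on the diagonal with first component \<open>i\<close>.\<close>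
lemma pconn_top_not_dvd:
  assumes nd: "\<not> m dvd n" and iq: "(i, q) \<in> pairs"
  shows "pconn (i, q) (m - 1, 0)"
proof -
  have step: "\<forall>q'<n. pconn (i, q') (i, (q' + 1) mod n)"
  proof (intro allI impI)
    fix q' assume "q' < n"
    then have iq': "(i, q') \<in> pairs" using iq by simp
    from exists_shift_q[OF nd iq']
    obtain k where "(q' + k * (n - 1)) mod n = 0 \<and> (i + k) mod m \<notin> {0, 1}" ..
    then show "pconn (i, q') (i, (q' + 1) mod n)" by (elim conjE) (rule pconn_next_q[OF iq'])
  qed
  define k where "k = m - 1 - i"
  define q0 where "q0 = k mod n"
  have iq0: "(i, q0) \<in> pairs" using iq n3 by (simp add: q0_def)
  have "q < n" "q0 < n" using iq iq0 by simp_all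
  then have "pconn (i, q) (i, q0)"
    using pconn_q_chain[OF step] pconn_sym pconn_trans by blast
  moreover have "(pair_a ^^ k) (i, q0) = (m - 1, 0)"
  proof -
    have "(i + k) mod m = m - 1" unfolding k_def using iq m3 by simp
    moreover have "(q0 + k * (n - 1)) mod n = 0" unfolding q0_def
      by (metis k_plus_k_times_pred_mod mod_add_left_eq)
    ultimately show ?thesis using pair_a_funpow[OF iq0] by simp
  qed
  ultimately show ?thesis using pconn_a[OF iq0, of k] pconn_trans by simp
qed

text \<open>Symmetrically, if \<open>n \<nmid> m\<close>, all pairs with the same second component are linked.\<close>
lemma pconn_top_not_dvd':
  assumes nd: "\<not> n dvd m" and iq: "(i, q) \<in> pairs"
  shows "pconn (i, q) (m - 1, 0)"
proof -
  have step: "\<forall>i'<m. pconn (i', q) ((i' + 1) mod m, q)"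
  proof (intro allI impI)
    fix i' assume "i' < m"
    then have iq': "(i', q) \<in> pairs" using iq by simp
    from exists_shift_i[OF nd iq']
    obtain k where "(i' + k) mod m = 0 \<and> (q + k * (n - 1)) mod n \<notin> {0, 1}" ..
    then show "pconn (i', q) ((i' + 1) mod m, q)" by (elim conjE) (rule pconn_next_i[OF iq'])
  qed
  define i0 where "i0 = (m - 1 + (m - 1) * q) mod m"
  have iq0: "(i0, q) \<in> pairs" using iq m3 by (simp add: i0_def)
  have "i < m" "i0 < m" using iq iq0 by simp_all
  then have "pconn (i, q) (i0, q)"
    using pconn_i_chain[OF step] pconn_sym pconn_trans by blast
  moreover have "(i0 + q) mod m = m - 1"
  proof -
    have e: "m - 1 + (m - 1) * q + q = (m - 1) + m * q" using m3 by (cases m) (simp_all add: algebra_simps)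
    have "(i0 + q) mod m = (m - 1 + (m - 1) * q + q) mod m" unfolding i0_def by (simp add: mod_simps)
    also have "\<dots> = m - 1" unfolding e mod_mult_self2 using m3 by simp
    finally show ?thesis .
  qed
  ultimately show ?thesis using pconn_top_diag[OF iq0] pconn_trans by blast
qed

lemma pconn_top_neq:
  assumes "m \<noteq> n" and "(i, q) \<in> pairs"
  shows "pconn (i, q) (m - 1, 0)"
proof (cases "m dvd n")
  case True
  then have "\<not> n dvd m" using assms(1) dvd_antisym by blast
  then show ?thesis using pconn_top_not_dvd'[OF _ assms(2)] by simp
qed (use pconn_top_not_dvd[OF _ assms(2)] in simp)

text \<open>If \<open>m = n\<close>, the letter \<open>a\<close> preserves \<open>i + q\<close> (mod \<open>n\<close>), and \<open>b\<close> can move the first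
  component forward whenever \<open>i + q \<notin> {0, 1}\<close>.  Climbing from a pair with \<open>i + q \<ge> 2\<close> we
  reach the diagonal \<open>i + q = n - 1\<close>; the pairs with \<open>i + q = 0\<close> are one step below it.
  Only the class \<open>i + q \<equiv> 1\<close> stays separate.\<close>
lemma pconn_next_i_eq:
  assumes mn: "m = n" and iq: "(i, q) \<in> pairs" and u: "(i + q) mod n \<notin> {0, 1}"
  shows "pconn (i, q) ((i + 1) mod m, q)"
proof -
  have "i < m" using iq by simp
  then have i: "i < n" using mn by simp
  have "(q + (n - i) * (n - 1) + (n - i)) mod n = (q + i + (n - i)) mod n"
  proof -
    have "q + (n - i) * (n - 1) + (n - i) = q + (n - i) * (n - 1 + 1)" by (simp add: distrib_left)
    also have "n - 1 + 1 = n" using n3 by simp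
    finally have "q + (n - i) * (n - 1) + (n - i) = q + (n - i) * n" .
    moreover have "q + i + (n - i) = q + n" using i by simp
    ultimately show ?thesis by simp
  qed
  then have "(q + (n - i) * (n - 1)) mod n = (q + i) mod n" by (rule mod_cancel_nat)
  then have avoid: "(q + (n - i) * (n - 1)) mod n \<notin> {0, 1}" using u by (simp add: add.commute)
  have to0: "(i + (n - i)) mod m = 0" using i mn by simp
  show ?thesis using pconn_next_i[OF iq to0 avoid] .
qed

lemma pconn_top_climb:
  assumes mn: "m = n"
  shows "(i, q) \<in> pairs \<Longrightarrow> 2 \<le> (i + q) mod n \<Longrightarrow> pconn (i, q) (m - 1, 0)"
proof (induction "n - 1 - (i + q) mod n" arbitrary: i rule: less_induct)
  case less
  show ?case
  proof (cases "(i + q) mod n = n - 1")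
    case True
    then show ?thesis using pconn_top_diag[OF less.prems(1)] mn by simp
  next
    case False
    have "(i + q) mod n < n" using n3 by simp
    then have below: "(i + q) mod n + 1 < n" using False by linarith
    have next_sum: "((i + 1) mod m + q) mod n = (i + q) mod n + 1"
    proof -
      have "((i + 1) mod m + q) mod n = ((i + q) mod n + 1) mod n"
        using mn by (simp add: mod_simps add.commute add.left_commute)
      then show ?thesis using below by simp
    qed
    have "((i + 1) mod m, q) \<in> pairs" using less.prems(1) m3 by simp
    then have "pconn ((i + 1) mod m, q) (m - 1, 0)"
      using less.hyps[of "(i + 1) mod m"] next_sum below less.prems(2) by simp
    moreover have "pconn (i, q) ((i + 1) mod m, q)"
      using pconn_next_i_eq[OF mn less.prems(1)] less.prems(2) by simp
    ultimately show ?thesis using pconn_trans by blast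
  qed
qed

text \<open>For \<open>m = n\<close> the pairs with \<open>i + q \<equiv> 0\<close> are linked to the diagonal by one step of
  \<open>pconn_next_i_eq\<close> taken from the pair just below.\<close>
lemma pconn_top_eq:
  assumes mn: "m = n" and iq: "(i, q) \<in> pairs" and u1: "(i + q) mod n \<noteq> 1"
  shows "pconn (i, q) (m - 1, 0)"
proof (cases "(i + q) mod n = 0")
  case False
  then show ?thesis using pconn_top_climb[OF mn iq] u1 by simp
next
  case True
  define i' where "i' = (i + (n - 1)) mod n"
  have iq': "(i', q) \<in> pairs" using iq n3 mn unfolding i'_def in_pairs by simp
  have "(i' + q) mod n = (i + (n - 1) + q) mod n" unfolding i'_def by (simp add: mod_add_left_eq)
  also have "i + (n - 1) + q = (i + q) + (n - 1)" by simp
  also have "((i + q) + (n - 1)) mod n = ((i + q) mod n + (n - 1)) mod n" by (simp add: mod_add_left_eq)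
  finally have diag: "(i' + q) mod n = n - 1" using True n3 by simp
  have "(i' + 1) mod m = i"
  proof -
    have "(i' + 1) mod m = (i + n) mod n" unfolding i'_def using mn n3 by (simp add: mod_simps)
    moreover have "i < n" using iq mn unfolding in_pairs by simp
    ultimately show ?thesis by simp
  qed
  then have to_i: "pconn (i', q) (i, q)" using pconn_next_i_eq[OF mn iq'] diag n3 by simp
  have "(i' + q) mod m = m - 1" using diag mn by simp
  then have "pconn (i', q) (m - 1, 0)" by (rule pconn_top_diag[OF iq'])
  then show ?thesis using pconn_trans[OF pconn_sym[OF to_i]] by blast
qed

theorem pconn_top:
  assumes "(i, q) \<in> pairs" and "\<not> (m = n \<and> (i + q) mod n = 1)"
  shows "pconn (i, q) (m - 1, 0)"
  using pconn_top_neq pconn_top_eq assms by blast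

end

section \<open>Reachability of all states of the product\<close>

context two_U
begin

abbreviation pA :: "nat \<times> nat set \<Rightarrow> nat \<times> nat set" where "pA y \<equiv> pstep y a"
abbreviation pB :: "nat \<times> nat set \<Rightarrow> nat \<times> nat set" where "pB y \<equiv> pstep y b"
abbreviation pC :: "nat \<times> nat set \<Rightarrow> nat \<times> nat set" where "pC y \<equiv> pstep y c"

lemma pA_eq: "pA (i, S) = ((i + 1) mod m, {q. q < n \<and> (q + 1) mod n \<in> S})"
  and pB_eq: "pB (i, S) = (swap01 i, {q. q < n \<and> swap01 q \<in> S})"
  and pC_eq: "pC (i, S) = (if i = m - 1 then 0 else i, {q. q < n \<and> (if q = n - 1 then 0 else q) \<in> S})"
  by (simp_all add: pstep_def U_delta_a U_delta_b U_delta_c)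

lemma reached_step: "y \<in> range reached \<Longrightarrow> pstep y s \<in> range reached"
  by (metis rangeE rangeI reached_snoc)

lemma start_reached: "(0, {n - 1}) \<in> range reached"
  by (metis rangeI reached_def foldl_Nil)

lemma reached_funpow: "y \<in> range reached \<Longrightarrow> (pA ^^ k) y \<in> range reached"
  by (induction k) (auto simp: reached_step)

lemma pA_funpow:
  "(i, S) \<in> states \<Longrightarrow> (pA ^^ k) (i, S) = ((i + k) mod m, {q. q < n \<and> (q + k) mod n \<in> S})"
proof (induction k)
  case (Suc k)
  have "(pA ^^ Suc k) (i, S) = pA ((i + k) mod m, {q. q < n \<and> (q + k) mod n \<in> S})"
    using Suc by simp
  also have "\<dots> = ((i + Suc k) mod m, {q. q < n \<and> (q + Suc k) mod n \<in> S})"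
    unfolding pA_eq by (auto simp: mod_simps)
  finally show ?case .
qed auto

text \<open>On the full state space, \<open>a\<close> and \<open>b\<close> act as permutations (of orders dividing \<open>m n\<close>
  and 2); \<open>sconn\<close> is the resulting connectivity, which cannot leave the reachable states.\<close>
abbreviation sconn :: "nat \<times> nat set \<Rightarrow> nat \<times> nat set \<Rightarrow> bool" where
  "sconn \<equiv> linked states {pA, pB}"

lemmas sconn_sym = linked_sym[of states "{pA, pB}"]
  and sconn_trans = linked_trans[of states "{pA, pB}"]

lemma pstep_maps: "(\<lambda>y. pstep y s) ` states \<subseteq> states"
  using pstep_in_states by blast

lemma sconn_pA:
  assumes "y \<in> states" shows "sconn y ((pA ^^ k) y)"
proof (rule linked_funpow[where N = "m * n"])
  obtain i S where y: "y = (i, S)" by (cases y)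
  have "(q + m * n) mod n = q mod n" for q by simp
  then have "{q. q < n \<and> (q + m * n) mod n \<in> S} = S" using assms y by auto
  moreover have "(i + m * n) mod m = i" using assms y by simp
  ultimately show "(pA ^^ (m * n)) y = y" using pA_funpow assms y by simp
qed (use assms m3 n3 pstep_maps in auto)

lemma sconn_pB:
  assumes "y \<in> states" shows "sconn y (pB y)"
proof -
  obtain i S where y: "y = (i, S)" by (cases y)
  have "pB (pB y) = y"
    using assms y m3 n3 by (auto simp: pB_eq swap01_lt)
  then show ?thesis
    using linked_funpow[of pB _ states y 2 1] assms pstep_maps by (simp add: numeral_2_eq_2)
qed

lemma sconn_reached:
  assumes "sconn y z" "y \<in> states" "z \<in> states" "z \<in> range reached"
  shows "y \<in> range reached"
proof -
  have "closed_under states {pA, pB} (range reached)"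
    unfolding closed_under_def using reached_step by blast
  then show ?thesis using assms unfolding linked_def by blast
qed

lemma pA_singleton: "q < n \<Longrightarrow> pA (i, {q}) = ((i + 1) mod m, {(q + (n - 1)) mod n})"
proof -
  assume q: "q < n"
  have "(q' + 1) mod n = q \<longleftrightarrow> q' = (q + (n - 1)) mod n" if "q' < n" for q'
  proof
    assume "(q' + 1) mod n = q"
    then have "(q + (n - 1)) mod n = ((q' + 1) mod n + (n - 1)) mod n" by simp
    also have "\<dots> = (q' + 1 + (n - 1)) mod n" by (simp add: mod_add_left_eq)
    also have "q' + 1 + (n - 1) = q' + n" using n3 by simp
    finally show "q' = (q + (n - 1)) mod n" using that by simp
  next
    assume "q' = (q + (n - 1)) mod n"
    then have "(q' + 1) mod n = (q + n) mod n" using n3 by (simp add: mod_simps)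
    then show "(q' + 1) mod n = q" using q by simp
  qed
  then show ?thesis using n3 by (auto simp: pA_eq)
qed

lemma pB_singleton: "q < n \<Longrightarrow> pB (i, {q}) = (swap01 i, {swap01 q})"
  using n3 by (auto simp: pB_eq swap01_lt)

text \<open>Every state \<open>(i, {q})\<close> is reachable: the set of pairs with reachable singleton state is
  closed under the pair permutations and contains \<open>(0, n - 1)\<close>, so by the connectivity of the
  pair graph it contains everything except possibly the exceptional pairs of the case
  \<open>m = n\<close>, which are reached through \<open>c\<close>.\<close>
lemma singleton_reached:
  assumes iq: "(i, q) \<in> pairs"
  shows "(i, {q}) \<in> range reached"
proof -
  define X where "X = {s. (fst s, {snd s}) \<in> range reached}"
  have closed: "closed_under pairs {pair_a, pair_b} X"
    unfolding closed_under_def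
  proof (intro ballI impI)
    fix g s assume g: "g \<in> {pair_a, pair_b}" and "s \<in> pairs" "s \<in> X"
    then obtain j p where s: "s = (j, p)" "p < n" and R: "(j, {p}) \<in> range reached"
      by (cases s) (auto simp: X_def)
    show "g s \<in> X"
      using g reached_step[OF R, of a] reached_step[OF R, of b] s
      by (auto simp: X_def pair_a_def pair_b_def pA_singleton pB_singleton)
  qed
  have start: "(0, n - 1) \<in> X" using start_reached by (simp add: X_def)
  have "n - 1 \<noteq> 1" using n3 by simp
  then have "pconn (0, n - 1) (m - 1, 0)" using pconn_top[of 0 "n - 1"] m3 n3 by simp
  then have top: "(m - 1, 0) \<in> X" using closed start unfolding linked_def by blast
  have from_top: "s \<in> X" if "s \<in> pairs" "pconn s (m - 1, 0)" for s
    using that closed top unfolding linked_def by blast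
  show ?thesis
  proof (cases "m = n \<and> (i + q) mod n = 1")
    case False
    then show ?thesis using from_top[OF iq pconn_top[OF iq]] by (simp add: X_def)
  next
    case True
    have "\<not> (m = n \<and> (m - 1 + 1) mod n = 1)" using m3 by auto
    then have "(m - 1, 1) \<in> X" using from_top pconn_top[of "m - 1" 1] m3 n3 by simp
    then have "pC (m - 1, {1}) \<in> range reached" using reached_step by (simp add: X_def)
    moreover have "pC (m - 1, {1}) = (0, {1})" using n3 by (auto simp: pC_eq)
    ultimately have R: "(0, {1}) \<in> range reached" by simp
    have "{q'. q' < n \<and> (q' + i) mod n = 1} = {q}"
    proof -
      have qn: "q < n" using iq by simp
      have qi: "(q + i) mod n = 1" using True by (simp add: add.commute)
      have "(q' + i) mod n = 1 \<longleftrightarrow> q' = q" if "q' < n" for q'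
        using qn qi that mod_cancel_nat[of q' i n q] by auto
      then show ?thesis using qn by auto
    qed
    then have "(pA ^^ i) (0, {1}) = (i, {q})" using pA_funpow[of 0 "{1}" i] iq n3 by simp
    then show ?thesis using reached_funpow[OF R, of i] by simp
  qed
qed

lemma empty_reached: "i < m \<Longrightarrow> (i, {}) \<in> range reached"
proof -
  assume i: "i < m"
  have "pC (0, {n - 1}) = (0, {})" using m3 n3 by (auto simp: pC_eq)
  then have R: "(0, {}) \<in> range reached" using reached_step[OF start_reached, of c] by simp
  have "(pA ^^ i) (0, {}) = (i, {})" using pA_funpow[of 0 "{}" i] i by simp
  then show ?thesis using reached_funpow[OF R, of i] by simp
qed

end

lemma card_preimage_perm:
  fixes f :: "nat \<Rightarrow> nat"
  assumes maps: "\<forall>q<k. f q < k" and inj: "inj_on f {..<k}" and S: "S \<subseteq> {..<k}"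
  shows "card {q. q < k \<and> f q \<in> S} = card S"
proof -
  have onto: "f ` {..<k} = {..<k}"
    by (rule endo_inj_surj) (use maps inj in auto)
  have "bij_betw f {q. q < k \<and> f q \<in> S} S"
    unfolding bij_betw_def
  proof
    show "inj_on f {q. q < k \<and> f q \<in> S}" using inj by (rule inj_on_subset) auto
    show "f ` {q. q < k \<and> f q \<in> S} = S" using S onto by auto
  qed
  then show ?thesis by (rule bij_betw_same_card)
qed

text \<open>The transposition of the adjacent states \<open>y\<close> and \<open>y + 1\<close>.  It is the conjugate of
  the transposition \<open>(0 1)\<close> by the rotation by \<open>y\<close>.\<close>
definition swap_adj :: "nat \<Rightarrow> nat \<Rightarrow> nat" where
  "swap_adj y q = (if q = y then y + 1 else if q = y + 1 then y else q)"

lemma swap_adj_swap_adj [simp]: "swap_adj y (swap_adj y q) = q"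
  by (simp add: swap_adj_def)

lemma swap_adj_rotate:
  fixes k :: nat
  assumes "q < k" "y + 1 < k"
  shows "swap_adj y ((q + y) mod k) = (swap01 q + y) mod k"
proof -
  consider "q = 0" | "q = 1" | "q \<ge> 2" by linarith
  then show ?thesis
  proof cases
    case 3
    have "(q + y) mod k = (if q + y < k then q + y else q + y - k)"
      using assms by (simp add: le_mod_geq)
    then have "(q + y) mod k \<noteq> y \<and> (q + y) mod k \<noteq> y + 1" using assms 3 by auto
    then show ?thesis using 3 by (simp add: swap_adj_def swap01_def)
  qed (use assms in \<open>simp_all add: swap_adj_def swap01_def\<close>)
qed

context two_U
begin

lemma card_rotate: "S \<subseteq> {..<n} \<Longrightarrow> card {q. q < n \<and> (q + p) mod n \<in> S} = card S"
proof (rule card_preimage_perm)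
  show "inj_on (\<lambda>q. (q + p) mod n) {..<n}"
  proof (rule inj_onI)
    fix x y assume "x \<in> {..<n}" "y \<in> {..<n}" "(x + p) mod n = (y + p) mod n"
    then show "x = y" using mod_cancel_nat[of x p n y] by simp
  qed
qed (use n3 in simp)

text \<open>Reading \<open>a\<^sup>y b a\<^sup>-\<^sup>y\<close> applies the transposition \<open>(y, y+1)\<close> to the set component, while
  the \<open>U\<^sub>m\<close> component moves to \<open>transp_idx y i\<close>; so these two states are connected.\<close>
definition transp_set :: "nat \<Rightarrow> nat set \<Rightarrow> nat set" where
  "transp_set y T = {q. q < n \<and> swap_adj y q \<in> T}"

definition transp_idx :: "nat \<Rightarrow> nat \<Rightarrow> nat" where
  "transp_idx y i = (swap01 ((i + y) mod m) + (m - 1) * y) mod m"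

lemma card_transp_set: "y + 1 < n \<Longrightarrow> T \<subseteq> {..<n} \<Longrightarrow> card (transp_set y T) = card T"
  unfolding transp_set_def
proof (rule card_preimage_perm)
  show "inj_on (swap_adj y) {..<n}" by (rule inj_on_inverseI[where g = "swap_adj y"]) simp
qed (auto simp: swap_adj_def)

lemma transp_set_move:
  "y + 1 < n \<Longrightarrow> T \<subseteq> {..<n} \<Longrightarrow> y \<in> T \<Longrightarrow> y + 1 \<notin> T \<Longrightarrow> transp_set y T = T - {y} \<union> {y + 1}"
  unfolding transp_set_def swap_adj_def by auto

lemma transp_in_states: "(transp_idx y i, transp_set y T) \<in> states"
  using m3 by (auto simp: transp_idx_def transp_set_def)

lemma sconn_transp:
  assumes iT: "(i, T) \<in> states" and y: "y + 1 < n"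
  shows "sconn (i, T) (transp_idx y i, transp_set y T)"
proof -
  define R where "R = {q. q < n \<and> (q + y) mod n \<in> T}"
  have rot: "(pA ^^ y) (i, T) = ((i + y) mod m, R)" using pA_funpow[OF iT] unfolding R_def by simp
  have "(transp_idx y i + y) mod m = swap01 ((i + y) mod m)"
  proof -
    have "(m - 1) * y + y = m * y" using m3 by (cases m) (simp_all add: algebra_simps)
    then have "(transp_idx y i + y) mod m = (swap01 ((i + y) mod m) + m * y) mod m"
      unfolding transp_idx_def by (simp add: mod_simps add.assoc)
    then show ?thesis using m3 swap01_lt[of "(i + y) mod m" m] by simp
  qed
  moreover have "{q. q < n \<and> (q + y) mod n \<in> transp_set y T} = {q. q < n \<and> swap01 q \<in> R}"
  proof -
    have "(q + y) mod n \<in> transp_set y T \<longleftrightarrow> swap01 q \<in> R" if q: "q < n" for q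
    proof -
      have "(q + y) mod n \<in> transp_set y T \<longleftrightarrow> (swap01 q + y) mod n \<in> T"
        unfolding transp_set_def using swap_adj_rotate[OF q y] n3 by simp
      also have "\<dots> \<longleftrightarrow> swap01 q \<in> R" unfolding R_def using swap01_lt[OF q] n3 by simp
      finally show ?thesis .
    qed
    then show ?thesis by auto
  qed
  ultimately have rot': "(pA ^^ y) (transp_idx y i, transp_set y T) = pB ((i + y) mod m, R)"
    using pA_funpow[OF transp_in_states] by (simp add: pB_eq)
  have "((i + y) mod m, R) \<in> states"
    using funpow_closed[OF pstep_maps[of a] iT, of y] rot by simp
  then have "sconn ((i + y) mod m, R) (pB ((i + y) mod m, R))" by (rule sconn_pB)
  moreover have "sconn (i, T) ((i + y) mod m, R)" using sconn_pA[OF iT, of y] rot by simp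
  moreover have "sconn (transp_idx y i, transp_set y T) (pB ((i + y) mod m, R))"
    using sconn_pA[OF transp_in_states[of y i T], of y] rot' by simp
  ultimately show ?thesis by (blast intro: sconn_trans sconn_sym)
qed

subsection \<open>Induction on the size of the set component\<close>

definition level_reached :: "nat \<Rightarrow> bool" where
  "level_reached k \<longleftrightarrow> (\<forall>i S. (i, S) \<in> states \<longrightarrow> card S = k \<longrightarrow> (i, S) \<in> range reached)"

lemma level_reached_0: "level_reached 0"
  unfolding level_reached_def using empty_reached by (auto dest: finite_subset)

lemma level_reached_1: "level_reached 1"
  unfolding level_reached_def using singleton_reached by (auto simp: card_1_singleton_iff)

text \<open>Reading \<open>c\<close> adds \<open>n - 1\<close> to a set containing 0 (as \<open>c\<close> merges \<open>n - 1\<close> into 0), and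
  leaves the \<open>U\<^sub>m\<close> component unchanged unless it is \<open>m - 1\<close>.\<close>
lemma add_last_reached:
  assumes lvl: "level_reached k" and iT: "(i, T) \<in> states" and cT: "card T = Suc k"
    and T0: "0 \<in> T" and Tn: "n - 1 \<in> T" and i: "i \<noteq> m - 1"
  shows "(i, T) \<in> range reached"
proof -
  have Tsub: "T \<subseteq> {..<n}" using iT by simp
  have "card (T - {n - 1}) = k" using cT Tn finite_subset[OF Tsub] by simp
  moreover have "(i, T - {n - 1}) \<in> states" using iT by auto
  ultimately have R: "(i, T - {n - 1}) \<in> range reached" using lvl unfolding level_reached_def by blast
  have "{q. q < n \<and> (if q = n - 1 then 0 else q) \<in> T - {n - 1}} = T" using Tsub T0 Tn n3 by auto
  then have "pC (i, T - {n - 1}) = (i, T)" using i by (simp add: pC_eq)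
  then show ?thesis using reached_step[OF R, of c] by simp
qed

text \<open>For \<open>i = m - 1\<close> we first apply the transposition \<open>(1 2)\<close>, which moves the \<open>U\<^sub>m\<close>
  component to 0; only for \<open>n = 3\<close>, \<open>T = {0, 2}\<close> is a further rotation needed.\<close>
lemma add_last_reached_top:
  assumes lvl: "level_reached k" and iT: "(m - 1, T) \<in> states" and cT: "card T = Suc k"
    and T0: "0 \<in> T" and Tn: "n - 1 \<in> T"
  shows "(m - 1, T) \<in> range reached"
proof -
  have Tsub: "T \<subseteq> {..<n}" using iT by simp
  define T' where "T' = transp_set 1 T"
  have "transp_idx 1 (m - 1) = 0" using m3 by (simp add: transp_idx_def swap01_def)
  then have link: "sconn (m - 1, T) (0, T')" using sconn_transp[OF iT, of 1] n3 by (simp add: T'_def)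
  have st': "(0, T') \<in> states" using transp_in_states[of 1 "m - 1" T] by (simp add: T'_def)
  have cT': "card T' = Suc k" using card_transp_set[OF _ Tsub, of 1] n3 cT by (simp add: T'_def)
  have T'0: "0 \<in> T'" using T0 n3 by (simp add: T'_def transp_set_def swap_adj_def)
  have "(0, T') \<in> range reached"
  proof (cases "n - 1 \<in> T'")
    case True
    then show ?thesis using add_last_reached[OF lvl st' cT' T'0] m3 by simp
  next
    case False
    then have n3': "n = 3" and "1 \<notin> T"
      using Tn n3 by (auto simp: T'_def transp_set_def swap_adj_def split: if_splits)
    then have T: "T = {0, 2}" using Tsub T0 Tn by (auto simp: lessThan_nat_numeral)
    have "(1, T) \<in> range reached" using add_last_reached[OF lvl _ cT T0 Tn] iT m3 by simp
    moreover have "pA (0, T') = (1, T)"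
    proof -
      have "T' = {0, 1}" unfolding T'_def transp_set_def using T n3' by (auto simp: swap_adj_def)
      then have "pA (0, T') = (1, {q. q < n \<and> (q + 1) mod n \<in> {0, 1}})" using m3 by (simp add: pA_eq)
      moreover have "{q. q < n \<and> (q + 1) mod n \<in> {0, 1}} = T" unfolding T n3' by auto presburger+
      ultimately show ?thesis by simp
    qed
    ultimately show ?thesis
      using sconn_reached[OF sconn_pA[OF st', of 1] st'] pstep_in_states[OF st', of a] by simp
  qed
  then show ?thesis using sconn_reached[OF link iT st'] by simp
qed

lemma add_last_reached_all:
  assumes "level_reached k" "(i, T) \<in> states" "card T = Suc k" "0 \<in> T" "n - 1 \<in> T"
  shows "(i, T) \<in> range reached"
  using add_last_reached[OF assms] add_last_reached_top[OF assms(1) _ assms(3-5)] assms(2)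
  by (cases "i = m - 1") auto

text \<open>A set containing 0 (and at least two elements) can be connected to one that also
  contains \<open>n - 1\<close>, by repeatedly moving its maximum up with a transposition.\<close>
lemma zero_in_reached:
  assumes lvl: "level_reached k" and k1: "1 \<le> k"
  shows "(i, T) \<in> states \<Longrightarrow> card T = Suc k \<Longrightarrow> 0 \<in> T \<Longrightarrow> (i, T) \<in> range reached"
proof (induction "n - 1 - Max T" arbitrary: i T rule: less_induct)
  case less
  have Tsub: "T \<subseteq> {..<n}" and fin: "finite T" using less.prems(1) finite_subset by auto
  define y where "y = Max T"
  have yT: "y \<in> T" unfolding y_def using Max_in[OF fin] less.prems(3) by auto
  show ?case
  proof (cases "y = n - 1")
    case True
    then show ?thesis using add_last_reached_all[OF lvl less.prems] yT by simp
  next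
    case False
    have yn: "y + 1 < n" using False yT Tsub by auto
    have y1: "y + 1 \<notin> T" using Max_ge[OF fin, of "y + 1"] unfolding y_def by auto
    have "y \<noteq> 0"
    proof
      assume "y = 0"
      then have "T \<subseteq> {0}" using Max_ge[OF fin] unfolding y_def by auto
      then show False using card_mono[of "{0::nat}" T] less.prems(2) k1 by simp
    qed
    define T' where "T' = T - {y} \<union> {y + 1}"
    have T': "transp_set y T = T'" unfolding T'_def using transp_set_move[OF yn Tsub yT y1] .
    have st': "(transp_idx y i, T') \<in> states" using transp_in_states T' by metis
    have "Max T' = y + 1"
    proof (rule Max_eqI)
      show "finite T'" "y + 1 \<in> T'" unfolding T'_def using fin by simp_all
      show "x \<le> y + 1" if "x \<in> T'" for x
        using that Max_ge[OF fin, of x] unfolding T'_def y_def by auto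
    qed
    then have "n - 1 - Max T' < n - 1 - Max T" using yn y_def by simp
    moreover have "card T' = Suc k" using card_transp_set[OF yn Tsub] T' less.prems(2) by simp
    moreover have "0 \<in> T'" unfolding T'_def using less.prems(3) \<open>y \<noteq> 0\<close> by simp
    ultimately have "(transp_idx y i, T') \<in> range reached" using less.hyps st' by blast
    then show ?thesis using sconn_reached[OF sconn_transp[OF less.prems(1) yn]] less.prems(1) st' T'
      by simp
  qed
qed

text \<open>Finally, any nonempty set is rotated by a power of \<open>a\<close> into one containing 0.\<close>
lemma level_reached_Suc:
  assumes lvl: "level_reached k" and k1: "1 \<le> k"
  shows "level_reached (Suc k)"
  unfolding level_reached_def
proof (intro allI impI)
  fix i S assume iS: "(i, S) \<in> states" and cS: "card S = Suc k"
  then have Ssub: "S \<subseteq> {..<n}" by simp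
  obtain p where pS: "p \<in> S" using cS by fastforce
  define R where "R = {q. q < n \<and> (q + p) mod n \<in> S}"
  have rot: "(pA ^^ p) (i, S) = ((i + p) mod m, R)" using pA_funpow[OF iS] unfolding R_def by simp
  have stR: "((i + p) mod m, R) \<in> states" using funpow_closed[OF pstep_maps[of a] iS, of p] rot by simp
  have "card R = Suc k" unfolding R_def using card_rotate[OF Ssub] cS by simp
  moreover have "0 \<in> R" unfolding R_def using pS Ssub n3 by auto
  ultimately have "((i + p) mod m, R) \<in> range reached" using zero_in_reached[OF lvl k1 stR] by simp
  then show "(i, S) \<in> range reached" using sconn_reached[OF sconn_pA[OF iS, of p] iS] stR rot by simp
qed

theorem all_states_reached: "states \<subseteq> range reached"
proof -
  have "level_reached k" for k
  proof (induction k)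
    case (Suc k)
    then show ?case using level_reached_1 level_reached_Suc[of k] by (cases k) auto
  qed (rule level_reached_0)
  then show ?thesis unfolding level_reached_def by auto
qed

end

section \<open>Distinguishability\<close>

text \<open>\<open>a\<^sup>k\<^sup>-\<^sup>1 c\<close> decrements every nonzero state of \<open>U\<^sub>k\<close> and fixes 0; repeating it \<open>k - 1\<close>
  times and then reading \<open>a\<^sup>z\<close> sends every state to \<open>z\<close>.\<close>
definition decr_word :: "nat \<Rightarrow> sym list" where
  "decr_word k = replicate (k - 1) a @ [c]"

definition sync_word :: "nat \<Rightarrow> nat \<Rightarrow> sym list" where
  "sync_word k z = concat (replicate (k - 1) (decr_word k)) @ replicate z a"

lemma U_run_decr:
  assumes "x < k"
  shows "foldl (U_delta k) x (decr_word k) = x - 1"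
proof (cases "x = 0")
  case True
  then show ?thesis using assms U_run_a[OF assms, of "k - 1"] by (simp add: decr_word_def U_delta_c)
next
  case False
  then have "(x + (k - 1)) mod k = x - 1" using assms by (simp add: le_mod_geq)
  then show ?thesis using assms U_run_a[OF assms, of "k - 1"] by (simp add: decr_word_def U_delta_c)
qed

lemma U_run_decr_power: "x < k \<Longrightarrow> foldl (U_delta k) x (concat (replicate j (decr_word k))) = x - j"
proof (induction j arbitrary: x)
  case (Suc j)
  have "foldl (U_delta k) x (concat (replicate (Suc j) (decr_word k)))
      = foldl (U_delta k) (foldl (U_delta k) x (decr_word k)) (concat (replicate j (decr_word k)))"
    by simp
  then show ?case using Suc U_run_decr[OF Suc.prems] by simp
qed simp

lemma U_run_sync: "q < k \<Longrightarrow> z < k \<Longrightarrow> foldl (U_delta k) q (sync_word k z) = z"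
  using U_run_decr_power[of q k "k - 1"] U_run_a[of 0 k z] by (simp add: sync_word_def)

context two_U
begin

text \<open>After the reversal of a synchronising word of \<open>U\<^sub>n\<close>, the set component has become
  \<open>{..<n}\<close> or \<open>{}\<close> according to whether \<open>z\<close> belonged to it.\<close>
lemma lang_at_after_sync:
  assumes "(i, S) \<in> states" "z < n"
  shows "rev (sync_word n z) @ w \<in> lang_at op (i, S)
           \<longleftrightarrow> op (foldl dm (foldl dm i (rev (sync_word n z))) w = m - 1) (z \<in> S)"
proof -
  have "foldl dn 0 (rev (rev (sync_word n z) @ w)) = z"
    using U_run_sync[OF dn_run_lt[of 0 "rev w"] assms(2)] n3 by simp
  then show ?thesis using assms(1) by (simp add: lang_at_run)
qed

text \<open>An operation for which the \<open>U\<^sub>m\<close> side can always tell a full from an empty set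
  component; this suffices to separate states with different set components.\<close>
definition full_empty_separable :: "(bool \<Rightarrow> bool \<Rightarrow> bool) \<Rightarrow> bool" where
  "full_empty_separable op \<longleftrightarrow>
     (\<forall>x<m. \<forall>y<m. \<exists>v. op (foldl dm x v = m - 1) True \<noteq> op (foldl dm y v = m - 1) False)"

lemma lang_at_sets_differ:
  assumes sep: "full_empty_separable op" and st: "(i, S) \<in> states" "(j, T) \<in> states"
    and z: "z \<in> S" "z \<notin> T"
  shows "lang_at op (i, S) \<noteq> lang_at op (j, T)"
proof -
  have zn: "z < n" using st z by auto
  define u where "u = rev (sync_word n z)"
  have "i < m" "j < m" using st by simp_all
  then have "foldl dm i u < m" "foldl dm j u < m" by (simp_all add: dm_run_lt)
  then obtain v where v: "op (foldl dm (foldl dm i u) v = m - 1) True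
      \<noteq> op (foldl dm (foldl dm j u) v = m - 1) False"
    using sep unfolding full_empty_separable_def by blast
  have "u @ v \<in> lang_at op (i, S) \<longleftrightarrow> op (foldl dm (foldl dm i u) v = m - 1) True"
    using lang_at_after_sync[OF st(1) zn] z unfolding u_def by simp
  moreover have "u @ v \<in> lang_at op (j, T) \<longleftrightarrow> op (foldl dm (foldl dm j u) v = m - 1) False"
    using lang_at_after_sync[OF st(2) zn] z unfolding u_def by simp
  ultimately show ?thesis using v by auto
qed

text \<open>Prepending a letter shows that this set
  is closed under preimages of the pair maps, so it contains all pairs linked to \<open>(m - 1, 0)\<close>.\<close>
definition ab_final :: "(nat \<times> nat) set" where
  "ab_final = {(i, q). \<exists>w. set w \<subseteq> {a, b} \<and> foldl dm i w = m - 1 \<and> foldl dn 0 (rev w) = q}"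

lemma ab_final_pair_a:
  assumes q: "q < n" and h: "pair_a (i, q) \<in> ab_final"
  shows "(i, q) \<in> ab_final"
proof -
  obtain w where w: "set w \<subseteq> {a, b}" "foldl dm ((i + 1) mod m) w = m - 1"
      "foldl dn 0 (rev w) = (q + (n - 1)) mod n"
    using h unfolding ab_final_def pair_a_def by auto
  have "foldl dn 0 (rev (a # w)) = ((q + (n - 1)) mod n + 1) mod n" using w(3) by (simp add: U_delta_a)
  also have "\<dots> = (q + (n - 1) + 1) mod n" by (simp add: mod_Suc_eq)
  also have "q + (n - 1) + 1 = q + n" using n3 by simp
  finally have "foldl dn 0 (rev (a # w)) = q" using q by simp
  moreover have "foldl dm i (a # w) = m - 1" using w(2) by (simp add: U_delta_a)
  ultimately show ?thesis using w(1) unfolding ab_final_def by (auto intro!: exI[of _ "a # w"])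
qed

lemma ab_final_pair_b:
  assumes h: "pair_b (i, q) \<in> ab_final"
  shows "(i, q) \<in> ab_final"
proof -
  obtain w where w: "set w \<subseteq> {a, b}" "foldl dm (swap01 i) w = m - 1" "foldl dn 0 (rev w) = swap01 q"
    using h unfolding ab_final_def pair_b_def by auto
  then have "foldl dm i (b # w) = m - 1" "foldl dn 0 (rev (b # w)) = q"
    by (simp_all add: U_delta_b)
  then show ?thesis using w(1) unfolding ab_final_def by (auto intro!: exI[of _ "b # w"])
qed

lemma ab_final_all:
  assumes iq: "(i, q) \<in> pairs" and nx: "\<not> (m = n \<and> (i + q) mod n = 1)"
  shows "(i, q) \<in> ab_final"
proof -
  have pre: "\<forall>g\<in>{pair_a, pair_b}. \<forall>s\<in>pairs. g s \<in> ab_final \<longrightarrow> s \<in> ab_final"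
    using ab_final_pair_a ab_final_pair_b by auto
  have "(m - 1, 0) \<in> ab_final" unfolding ab_final_def by (auto intro!: exI[of _ "[]"])
  moreover have "(m - 1, 0) \<in> pairs" using m3 n3 by simp
  ultimately show ?thesis
    using linked_preimage_closed[OF pconn_top[OF iq nx] iq _ _ pre] pair_a_maps pair_b_maps by blast
qed

lemma separating_ab_word:
  assumes i: "i < m" and j: "j < m" and ij: "i \<noteq> j" and p: "p < n"
  shows "\<exists>w. foldl dn 0 (rev w) = p \<and> (foldl dm i w = m - 1) \<noteq> (foldl dm j w = m - 1)"
proof -
  have one_side: "\<exists>w. foldl dn 0 (rev w) = p \<and> foldl dm x w = m - 1 \<and> foldl dm y w \<noteq> m - 1"
    if xy: "x < m" "y < m" "x \<noteq> y" and nx: "\<not> (m = n \<and> (x + p) mod n = 1)" for x y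
  proof -
    obtain w where w: "set w \<subseteq> {a, b}" "foldl dm x w = m - 1" "foldl dn 0 (rev w) = p"
      using ab_final_all[of x p] xy(1) nx p unfolding ab_final_def by auto
    have "foldl dm y w \<noteq> m - 1" using U_run_ab_inj[OF w(1) xy(1,2)] w(2) xy(3) m3 by auto
    then show ?thesis using w by blast
  qed
  have "\<not> (m = n \<and> (i + p) mod n = 1) \<or> \<not> (m = n \<and> (j + p) mod n = 1)"
  proof (rule ccontr)
    assume "\<not> ?thesis"
    then have "(i + p) mod n = (j + p) mod n" "m = n" by simp_all
    then show False using mod_cancel_nat[of i p n j] i j ij by simp
  qed
  then show ?thesis using one_side[OF i j ij] one_side[OF j i ij[symmetric]] by metis
qed

lemma lang_at_idx_differ:
  assumes iS: "(i, S) \<in> states" and j: "j < m" and ij: "i \<noteq> j"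
    and p: "p < n" and sens: "op True (p \<in> S) \<noteq> op False (p \<in> S)"
  shows "lang_at op (i, S) \<noteq> lang_at op (j, S)"
proof -
  have i: "i < m" and S: "S \<subseteq> {..<n}" using iS by simp_all
  obtain w where w: "foldl dn 0 (rev w) = p" and "(foldl dm i w = m - 1) \<noteq> (foldl dm j w = m - 1)"
    using separating_ab_word[OF i j ij p] by blast
  then have "op (foldl dm i w = m - 1) (p \<in> S) \<noteq> op (foldl dm j w = m - 1) (p \<in> S)"
    using sens by (cases "foldl dm i w = m - 1") auto
  then show ?thesis using w by (auto simp: lang_at_run[OF S])
qed

end

section \<open>Counting the quotients\<close>

lemma card_image_collapse:
  assumes fin: "finite A" "finite B" and a0: "a0 \<in> A" and b0: "b0 \<in> B"
    and eq: "\<forall>y\<in>A \<times> B. \<forall>z\<in>A \<times> B. f y = f z \<longleftrightarrow> y = z \<or> (snd y = b0 \<and> snd z = b0)"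
  shows "card (f ` (A \<times> B)) = card A * card B - (card A - 1)"
proof -
  have split: "f ` (A \<times> B) = insert (f (a0, b0)) (f ` (A \<times> (B - {b0})))"
    using eq a0 b0 by auto
  have "inj_on f (A \<times> (B - {b0}))"
    using eq by (auto simp: inj_on_def)
  moreover have "f (a0, b0) \<notin> f ` (A \<times> (B - {b0}))"
    using eq a0 b0 by auto
  ultimately have "card (f ` (A \<times> B)) = Suc (card A * (card B - 1))"
    using fin b0 by (simp add: split card_image card_cartesian_product)
  moreover have "1 \<le> card A" "1 \<le> card B" using fin a0 b0 by (auto simp: Suc_le_eq card_gt_0_iff)
  moreover have "card A * (card B - 1) = card A * card B - card A" by (simp add: diff_mult_distrib2)
  moreover have "card A \<le> card A * card B" using \<open>1 \<le> card B\<close> by simp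
  ultimately show ?thesis by linarith
qed

context two_U
begin

text \<open>Since every state is reachable, the left quotients of the combined language are
  exactly the languages of the states, and the state complexity counts the latter.\<close>
lemma range_left_quot_combined: "range (left_quot (combined op)) = lang_at op ` states"
proof
  show "range (left_quot (combined op)) \<subseteq> lang_at op ` states"
    using left_quot_combined reached_in_states by auto
  show "lang_at op ` states \<subseteq> range (left_quot (combined op))"
  proof
    fix L assume "L \<in> lang_at op ` states"
    then obtain y where "y \<in> states" and L: "L = lang_at op y" by blast
    then obtain u where "y = reached u" using all_states_reached by blast
    then show "L \<in> range (left_quot (combined op))" using L left_quot_combined by simp
  qed
qed

lemma sc_combined: "state_complexity (combined op) = card (lang_at op ` states)"
  using state_complexity_eq_card_left_quots[of "combined op"] range_left_quot_combined
  by (simp add: states_def)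

lemma lang_at_eq_iff:
  assumes sep: "full_empty_separable op" and iS: "(i, S) \<in> states" and jT: "(j, T) \<in> states"
  shows "lang_at op (i, S) = lang_at op (j, T) \<longleftrightarrow>
           S = T \<and> (i = j \<or> (\<forall>p<n. op True (p \<in> S) = op False (p \<in> S)))"
proof
  assume eq: "lang_at op (i, S) = lang_at op (j, T)"
  have "S = T" using lang_at_sets_differ[OF sep iS jT] lang_at_sets_differ[OF sep jT iS] eq by blast
  moreover have "i = j \<or> (\<forall>p<n. op True (p \<in> S) = op False (p \<in> S))"
    using lang_at_idx_differ[OF iS] jT eq \<open>S = T\<close> by auto
  ultimately show "S = T \<and> (i = j \<or> (\<forall>p<n. op True (p \<in> S) = op False (p \<in> S)))" ..
next
  assume "S = T \<and> (i = j \<or> (\<forall>p<n. op True (p \<in> S) = op False (p \<in> S)))"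
  moreover have "op X (foldl dn 0 (rev w) \<in> S) = op Y (foldl dn 0 (rev w) \<in> S)"
    if "\<forall>p<n. op True (p \<in> S) = op False (p \<in> S)" for X Y w
    using that dn_run_lt[of 0 "rev w"] n3 by (cases X; cases Y) auto
  ultimately show "lang_at op (i, S) = lang_at op (j, T)"
    using iS by (auto simp: lang_at_run)
qed

text \<open>Sufficient conditions for separability: the word \<open>c\<close> makes both \<open>U\<^sub>m\<close> components
  non-final, and a power of \<open>a\<close> makes either one of them final.\<close>
lemma full_empty_separableI:
  assumes "op False True \<noteq> op False False \<or> (\<forall>Q. op True True \<noteq> op Q False)
      \<or> (\<forall>P. op P True \<noteq> op True False)"
  shows "full_empty_separable op"
  unfolding full_empty_separable_def
proof (intro allI impI)
  fix x y assume x: "x < m" and y: "y < m"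
  have c: "foldl dm z [c] \<noteq> m - 1" if "z < m" for z
    using that m3 by (simp add: U_delta_c)
  have top: "foldl dm z (replicate (m - 1 - z) a) = m - 1" if "z < m" for z
    using that U_run_a[OF that] m3 by simp
  from assms consider "op False True \<noteq> op False False" | "\<forall>Q. op True True \<noteq> op Q False"
    | "\<forall>P. op P True \<noteq> op True False" by blast
  then show "\<exists>v. op (foldl dm x v = m - 1) True \<noteq> op (foldl dm y v = m - 1) False"
  proof cases
    case 1
    then show ?thesis using c[OF x] c[OF y] by (intro exI[of _ "[c]"]) simp
  next
    case 2
    then show ?thesis using top[OF x] by (intro exI[of _ "replicate (m - 1 - x) a"]) simp
  next
    case 3
    then show ?thesis using top[OF y] by (intro exI[of _ "replicate (m - 1 - y) a"]) simp
  qed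
qed

text \<open>If \<open>op\<close> ignores its first argument exactly when its second argument is \<open>s\<close>, the
  \<open>m - 1\<close> nonzero states with set component \<open>{..<n}\<close> (for \<open>s\<close>) or \<open>{}\<close> collapse.\<close>
lemma sc_collapsing:
  assumes sep: "full_empty_separable op"
    and absorb: "op True s = op False s" and sens: "op True (\<not> s) \<noteq> op False (\<not> s)"
  shows "state_complexity (combined op) = m * 2 ^ n - (m - 1)"
proof -
  define Sb where "Sb = (if s then {..<n} else {})"
  have key: "op True (p \<in> S) = op False (p \<in> S) \<longleftrightarrow> (p \<in> S) = s" for p S
    using absorb sens by (cases "p \<in> S"; cases s) auto
  have ignores: "(\<forall>p<n. op True (p \<in> S) = op False (p \<in> S)) \<longleftrightarrow> S = Sb"
    if "S \<subseteq> {..<n}" for S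
  proof -
    have "(\<forall>p<n. op True (p \<in> S) = op False (p \<in> S)) \<longleftrightarrow> (\<forall>p<n. (p \<in> S) = s)"
      by (simp only: key)
    also have "\<dots> \<longleftrightarrow> S = Sb" using that unfolding Sb_def by (cases s) auto
    finally show ?thesis .
  qed
  have "\<forall>y\<in>{..<m} \<times> Pow {..<n}. \<forall>z\<in>{..<m} \<times> Pow {..<n}.
      lang_at op y = lang_at op z \<longleftrightarrow> y = z \<or> (snd y = Sb \<and> snd z = Sb)"
  proof (intro ballI)
    fix y z assume "y \<in> {..<m} \<times> Pow {..<n}" "z \<in> {..<m} \<times> Pow {..<n}"
    then obtain i S j T where "y = (i, S)" "z = (j, T)" "(i, S) \<in> states" "(j, T) \<in> states"
      by (auto simp: states_def)
    then show "lang_at op y = lang_at op z \<longleftrightarrow> y = z \<or> (snd y = Sb \<and> snd z = Sb)"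
      using lang_at_eq_iff[OF sep] ignores by auto
  qed
  then have "card (lang_at op ` ({..<m} \<times> Pow {..<n}))
      = card {..<m} * card (Pow {..<n}) - (card {..<m} - 1)"
    using m3 by (intro card_image_collapse[of _ _ 0 Sb]) (auto simp: Sb_def)
  then show ?thesis using sc_combined by (simp add: states_def card_Pow)
qed

lemma sc_sensitive:
  assumes sep: "full_empty_separable op" and sens: "\<And>s. op True s \<noteq> op False s"
  shows "state_complexity (combined op) = m * 2 ^ n"
proof -
  have nonconst: "\<not> (\<forall>p<n. op True (p \<in> S) = op False (p \<in> S))" for S
  proof
    assume "\<forall>p<n. op True (p \<in> S) = op False (p \<in> S)"
    then have "op True (0 \<in> S) = op False (0 \<in> S)" using n3 by simp
    then show False using sens by blast
  qed
  have "inj_on (lang_at op) states"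
  proof (rule inj_onI)
    fix y z assume "y \<in> states" "z \<in> states" and eq: "lang_at op y = lang_at op z"
    then obtain i S j T where yz: "y = (i, S)" "z = (j, T)" "(i, S) \<in> states" "(j, T) \<in> states"
      by (cases y, cases z) auto
    then show "y = z" using eq lang_at_eq_iff[OF sep yz(3,4)] nonconst by blast
  qed
  then have "card (lang_at op ` states) = card states" by (rule card_image)
  then show ?thesis using sc_combined by (simp add: states_def card_Pow card_cartesian_product)
qed

end

context two_U
begin

text \<open>Union and the difference \<open>U\<^sub>m - U\<^sub>n\<^sup>R\<close> are absorbed by a full set component,
  intersection and \<open>U\<^sub>n\<^sup>R - U\<^sub>m\<close> by an empty one; the symmetric difference always depends
  on the \<open>U\<^sub>m\<close> component.\<close>
lemma sc_union: "state_complexity (U_lang m \<union> lang_rev (U_lang n)) = m * 2 ^ n - (m - 1)"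
proof -
  have "U_lang m \<union> lang_rev (U_lang n) = combined (\<lambda>x y. x \<or> y)" by (auto simp: combined_def)
  then show ?thesis using sc_collapsing[of _ True] full_empty_separableI by simp
qed

lemma sc_inter: "state_complexity (U_lang m \<inter> lang_rev (U_lang n)) = m * 2 ^ n - (m - 1)"
proof -
  have "U_lang m \<inter> lang_rev (U_lang n) = combined (\<lambda>x y. x \<and> y)" by (auto simp: combined_def)
  then show ?thesis using sc_collapsing[of _ False] full_empty_separableI by simp
qed

lemma sc_diff: "state_complexity (U_lang m - lang_rev (U_lang n)) = m * 2 ^ n - (m - 1)"
proof -
  have "U_lang m - lang_rev (U_lang n) = combined (\<lambda>x y. x \<and> \<not> y)" by (auto simp: combined_def)
  then show ?thesis using sc_collapsing[of _ True] full_empty_separableI by simp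
qed

lemma sc_diff_rev: "state_complexity (lang_rev (U_lang n) - U_lang m) = m * 2 ^ n - (m - 1)"
proof -
  have "lang_rev (U_lang n) - U_lang m = combined (\<lambda>x y. y \<and> \<not> x)" by (auto simp: combined_def)
  then show ?thesis using sc_collapsing[of _ False] full_empty_separableI by simp
qed

lemma sc_sym_diff:
  "state_complexity ((U_lang m - lang_rev (U_lang n)) \<union> (lang_rev (U_lang n) - U_lang m)) = m * 2 ^ n"
proof -
  have "(U_lang m - lang_rev (U_lang n)) \<union> (lang_rev (U_lang n) - U_lang m) = combined (\<noteq>)"
    by (auto simp: combined_def)
  then show ?thesis using sc_sensitive[of "(\<noteq>)"] full_empty_separableI by simp
qed

end

theorem theorem2:
  fixes m n :: nat
  assumes "m \<ge> 3" and "n \<ge> 3"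
  shows "state_complexity (U_lang m \<union> lang_rev (U_lang n)) = m * 2 ^ n - (m - 1)
    \<and> state_complexity (U_lang m \<inter> lang_rev (U_lang n)) = m * 2 ^ n - (m - 1)
    \<and> state_complexity (U_lang m - lang_rev (U_lang n)) = m * 2 ^ n - (m - 1)
    \<and> state_complexity (lang_rev (U_lang n) - U_lang m) = m * 2 ^ n - (m - 1)
    \<and> state_complexity ((U_lang m - lang_rev (U_lang n)) \<union> (lang_rev (U_lang n) - U_lang m))
        = m * 2 ^ n"
proof -
  interpret two_U m n using assms by unfold_locales
  show ?thesis using sc_union sc_inter sc_diff sc_diff_rev sc_sym_diff by blast
qed

end
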